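(* For every integer $k$, there exists a strongly connected digraph $D$ with $\chi(D)>k$ that contains no $3$-spindle and no $(2+2)$-bispindle (as a subdigraph).
   Context: Digraphs are finite, without loops or parallel arcs (two opposite arcs $uv$, $vu$ are allowed). The chromatic number $\chi(D)$ of a digraph $D$ is the chromatic number of its underlying undirected graph. A digraph is strongly connected if for any two vertices $x,y$ there is a directed path from $x$ to $y$. For distinct vertices $x,y$, a $p$-spindle with tail $x$ and head $y$ is a union of $p$ pairwise internally vertex-disjoint directed paths from $x$ to $y$. A $(p+q)$-bispindle is the union of $p$ directed $(x,y)$-paths and $q$ directed $(y,x)$-paths for some distinct vertices $x,y$, all these $p+q$ directed paths being pairwise internally vertex-disjoint. *)

theory Defs
  imports Main
begin

definition digraph :: "'a set \<Rightarrow> ('a \<times> 'a) set \<Rightarrow> bool" where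
  "digraph V A \<longleftrightarrow> finite V \<and> A \<subseteq> V \<times> V \<and> (\<forall>v. (v, v) \<notin> A)"

definition colourable :: "'a set \<Rightarrow> ('a \<times> 'a) set \<Rightarrow> nat \<Rightarrow> bool" where
  "colourable V A k \<longleftrightarrow> (\<exists>c :: 'a \<Rightarrow> nat. c ` V \<subseteq> {..<k} \<and> (\<forall>(u, v) \<in> A. c u \<noteq> c v))"

definition chromatic_number :: "'a set \<Rightarrow> ('a \<times> 'a) set \<Rightarrow> nat" where
  "chromatic_number V A = (LEAST k. colourable V A k)"

definition strongly_connected :: "'a set \<Rightarrow> ('a \<times> 'a) set \<Rightarrow> bool" where
  "strongly_connected V A \<longleftrightarrow> (\<forall>x\<in>V. \<forall>y\<in>V. (x, y) \<in> A\<^sup>*)"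

definition dipath :: "('a \<times> 'a) set \<Rightarrow> 'a list \<Rightarrow> 'a \<Rightarrow> 'a \<Rightarrow> bool" where
  "dipath A P x y \<longleftrightarrow> length P \<ge> 2 \<and> distinct P \<and> hd P = x \<and> last P = y \<and>
     (\<forall>i. Suc i < length P \<longrightarrow> (P ! i, P ! Suc i) \<in> A)"

definition interior :: "'a list \<Rightarrow> 'a set" where
  "interior P = set (butlast (tl P))"

definition has_spindle :: "'a set \<Rightarrow> ('a \<times> 'a) set \<Rightarrow> nat \<Rightarrow> bool" where
  "has_spindle V A p \<longleftrightarrow> (\<exists>x\<in>V. \<exists>y\<in>V. \<exists>P :: nat \<Rightarrow> 'a list. x \<noteq> y \<and>
     (\<forall>i<p. dipath A (P i) x y) \<and>
     (\<forall>i<p. \<forall>j<p. i \<noteq> j \<longrightarrow> P i \<noteq> P j \<and> interior (P i) \<inter> interior (P j) = {}))"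

definition has_bispindle :: "'a set \<Rightarrow> ('a \<times> 'a) set \<Rightarrow> nat \<Rightarrow> nat \<Rightarrow> bool" where
  "has_bispindle V A p q \<longleftrightarrow> (\<exists>x\<in>V. \<exists>y\<in>V. \<exists>P :: nat \<Rightarrow> 'a list. x \<noteq> y \<and>
     (\<forall>i<p. dipath A (P i) x y) \<and> (\<forall>i. p \<le> i \<and> i < p + q \<longrightarrow> dipath A (P i) y x) \<and>
     (\<forall>i<p+q. \<forall>j<p+q. i \<noteq> j \<longrightarrow> P i \<noteq> P j \<and> interior (P i) \<inter> interior (P j) = {}))"

end

theory Submission
  imports Defs "HOL-Library.FuncSet"
begin

text \<open>
  Call a digraph two-spindle-free if no two distinct internally disjoint directed paths have
  the same ends. Blanche Descartes' construction raises the chromatic number of such a digraph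
  D = (V, A) while keeping it two-spindle-free: take N = (k + 1) |V| sinks and, for every
  injection g of V into the sinks, a copy of D in which v sends an arc to the sink g v.
  A (k + 1)-colouring has a colour class of |V| sinks, and the copy sitting on them avoids that
  colour, so it is k-coloured. A path stays inside one copy except for a possible last arc into
  a sink, so two internally disjoint paths with the same ends either come from two such paths
  in D or enter the same sink from the same vertex.

  To make a two-spindle-free D strongly connected, number its vertices by 0..m and add the path
  Down m, ..., Down 0, Hub, Up 0, ..., Up m together with arcs v \<rightarrow> Down v and Up v \<rightarrow> v.
  Each new vertex has in- or out-degree 1 and both degrees at most 2, so the ends of a 3-spindle
  or a (2+2)-bispindle are old vertices. A path between old vertices that avoids Hub never leaves
  D, hence of two internally disjoint such paths one passes through Hub; but Hub is interior to
  at most one path of the family.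
\<close>

section \<open>Directed paths\<close>

definition internally_disjoint :: "'a list \<Rightarrow> 'a list \<Rightarrow> bool" where
  "internally_disjoint P Q \<longleftrightarrow> P \<noteq> Q \<and> interior P \<inter> interior Q = {}"

lemma dipath_length: "dipath A P x y \<Longrightarrow> 2 \<le> length P"
  unfolding dipath_def by simp

lemma dipath_nth_0: "dipath A P x y \<Longrightarrow> P ! 0 = x"
  unfolding dipath_def by (cases P) auto

lemma dipath_nth_last: "dipath A P x y \<Longrightarrow> P ! (length P - 1) = y"
  unfolding dipath_def by (cases P) (auto simp: last_conv_nth)

lemma dipath_arc: "dipath A P x y \<Longrightarrow> Suc i < length P \<Longrightarrow> (P ! i, P ! Suc i) \<in> A"
  unfolding dipath_def by auto

lemma dipath_first_arc: "dipath A P x y \<Longrightarrow> (x, P ! 1) \<in> A"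
  using dipath_arc[of A P x y 0] dipath_nth_0 dipath_length by fastforce

lemma dipath_last_arc:
  assumes "dipath A P x y" shows "(P ! (length P - 2), y) \<in> A"
proof -
  have "Suc (length P - 2) = length P - 1" using dipath_length[OF assms] by arith
  then show ?thesis using dipath_arc[OF assms, of "length P - 2"] dipath_nth_last[OF assms] by simp
qed

lemma dipath_rev:
  assumes "dipath A P x y" shows "dipath (A\<inverse>) (rev P) y x"
  unfolding dipath_def
proof (intro conjI allI impI)
  fix i assume i: "Suc i < length (rev P)"
  then have "Suc (length P - Suc (Suc i)) < length P"
    and "Suc (length P - Suc (Suc i)) = length P - Suc i" by auto
  then show "(rev P ! i, rev P ! Suc i) \<in> A\<inverse>"
    using dipath_arc[OF assms, of "length P - Suc (Suc i)"] i by (simp add: rev_nth)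
qed (use assms in \<open>auto simp: dipath_def hd_rev last_rev\<close>)

lemma interior_rev: "interior (rev P) = interior P"
  unfolding interior_def by (metis butlast_rev butlast_tl rev_rev_ident set_rev)

lemma interior_subset: "interior P \<subseteq> set P"
  unfolding interior_def by (cases P) (auto dest: in_set_butlastD)

lemma interior_map: "interior (map f P) = f ` interior P"
  unfolding interior_def by (simp add: map_tl[symmetric] map_butlast[symmetric])

lemma dipath_decomp:
  assumes "dipath A P x y"
  obtains M where "P = x # M @ [y]" "interior P = set M"
proof
  show "P = x # butlast (tl P) @ [y]"
    using assms unfolding dipath_def by (cases P; cases "tl P") (auto simp: last_tl)
qed (simp add: interior_def)

lemma set_dipath: assumes "dipath A P x y" shows "set P = insert x (insert y (interior P))"
proof -
  obtain M where "P = x # M @ [y]" "interior P = set M" using dipath_decomp[OF assms] .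
  then show ?thesis by auto
qed

lemma dipath_ends_notin_interior:
  assumes "dipath A P x y" shows "x \<notin> interior P \<and> y \<notin> interior P"
proof -
  obtain M where "P = x # M @ [y]" "interior P = set M" using dipath_decomp[OF assms] .
  then show ?thesis using assms unfolding dipath_def by auto
qed

lemma dipath_second_vertex:
  assumes "dipath A P x y" shows "P = [x, y] \<and> P ! 1 = y \<or> P ! 1 \<in> interior P"
proof -
  obtain M where "P = x # M @ [y]" "interior P = set M" using dipath_decomp[OF assms] .
  then show ?thesis by (cases M) auto
qed

lemma internally_disjoint_second_vertex:
  assumes P: "dipath A P x y" and Q: "dipath A Q x y" and "internally_disjoint P Q"
  shows "P ! 1 \<noteq> Q ! 1"
proof
  assume eq: "P ! 1 = Q ! 1"
  consider "P = [x, y]" "Q = [x, y]" | "P ! 1 \<in> interior P" "Q ! 1 \<in> interior Q"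
    using dipath_second_vertex[OF P] dipath_second_vertex[OF Q] eq
      dipath_ends_notin_interior[OF P] dipath_ends_notin_interior[OF Q] by metis
  then show False using assms(3) eq unfolding internally_disjoint_def by cases auto
qed

lemma internally_disjoint_rev:
  "internally_disjoint (rev P) (rev Q) \<longleftrightarrow> internally_disjoint P Q"
  unfolding internally_disjoint_def interior_rev by simp

lemma internally_disjoint_penultimate_vertex:
  assumes P: "dipath A P x y" and Q: "dipath A Q x y" and "internally_disjoint P Q"
  shows "P ! (length P - 2) \<noteq> Q ! (length Q - 2)"
proof -
  have "rev P ! 1 \<noteq> rev Q ! 1"
    using internally_disjoint_second_vertex[OF dipath_rev[OF P] dipath_rev[OF Q]] assms(3)
    by (simp add: internally_disjoint_rev)
  then show ?thesis
    using dipath_length[OF P] dipath_length[OF Q] by (simp add: rev_nth numeral_2_eq_2)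
qed

lemma pairwise_internally_disjoint_out_degree:
  assumes "finite A" "finite I" and paths: "\<And>i. i \<in> I \<Longrightarrow> dipath A (P i) x y"
    and disjoint: "pairwise (\<lambda>i j. internally_disjoint (P i) (P j)) I"
  shows "card I \<le> card (A `` {x})"
proof (rule card_inj_on_le)
  show "inj_on (\<lambda>i. P i ! 1) I"
  proof (rule inj_onI, rule ccontr)
    fix i j assume "i \<in> I" "j \<in> I" "P i ! 1 = P j ! 1" "i \<noteq> j"
    then show False
      using internally_disjoint_second_vertex[OF paths paths] pairwiseD[OF disjoint] by metis
  qed
  show "(\<lambda>i. P i ! 1) ` I \<subseteq> A `` {x}" using dipath_first_arc paths by fast
  show "finite (A `` {x})" using \<open>finite A\<close> by (simp add: finite_Image)
qed

lemma pairwise_internally_disjoint_in_degree: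
  assumes "finite A" "finite I" and paths: "\<And>i. i \<in> I \<Longrightarrow> dipath A (P i) x y"
    and disjoint: "pairwise (\<lambda>i j. internally_disjoint (P i) (P j)) I"
  shows "card I \<le> card (A\<inverse> `` {y})"
  using pairwise_internally_disjoint_out_degree[of "A\<inverse>" I "\<lambda>i. rev (P i)" y x] assms
  by (simp add: dipath_rev internally_disjoint_rev pairwise_def)

lemma dipath_map:
  assumes P: "dipath B P x y" and "set P \<subseteq> W" "inj_on f W"
    and arcs: "\<And>u v. u \<in> W \<Longrightarrow> v \<in> W \<Longrightarrow> (u, v) \<in> B \<Longrightarrow> (f u, f v) \<in> A"
  shows "dipath A (map f P) (f x) (f y)"
proof -
  have "inj_on f (set P)" using assms(2,3) by (rule inj_on_subset[rotated])
  moreover have "(map f P ! i, map f P ! Suc i) \<in> A" if "Suc i < length P" for i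
  proof -
    have "P ! i \<in> W" "P ! Suc i \<in> W" using assms(2) that by auto
    then show ?thesis using arcs dipath_arc[OF P that] that by simp
  qed
  moreover have "P \<noteq> []" using dipath_length[OF P] by auto
  ultimately show ?thesis using P unfolding dipath_def by (simp add: distinct_map hd_map last_map)
qed

lemma internally_disjoint_map:
  assumes "set P \<subseteq> W" "set Q \<subseteq> W" "inj_on f W" and PQ: "internally_disjoint P Q"
  shows "internally_disjoint (map f P) (map f Q)"
proof -
  have "inj_on f (set P \<union> set Q)" using inj_on_subset[OF assms(3)] assms(1,2) by simp
  then have "map f P \<noteq> map f Q"
    using PQ unfolding internally_disjoint_def by (simp add: inj_on_map_eq_map)
  moreover have "interior P \<subseteq> W" "interior Q \<subseteq> W"
    using assms(1,2) interior_subset[of P] interior_subset[of Q] by auto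
  then have "f ` interior P \<inter> f ` interior Q = f ` (interior P \<inter> interior Q)"
    by (rule inj_on_image_Int[OF assms(3), symmetric])
  then have "f ` interior P \<inter> f ` interior Q = {}"
    using PQ unfolding internally_disjoint_def by simp
  ultimately show ?thesis unfolding internally_disjoint_def interior_map by simp
qed

lemma dipath_closed_suffix:
  assumes P: "dipath A P x y"
    and closed: "\<And>u v. u \<in> S \<Longrightarrow> (u, v) \<in> A \<Longrightarrow> v \<in> set P \<Longrightarrow> v \<in> S"
    and "i \<le> j" "j < length P" "P ! i \<in> S"
  shows "P ! j \<in> S"
  using assms(3-5)
proof (induction j)
  case (Suc j)
  show ?case
  proof (cases "i = Suc j")
    case False
    then have "P ! j \<in> S" using Suc by simp
    then show ?thesis using closed dipath_arc[OF P \<open>Suc j < length P\<close>] Suc.prems(2) by simp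
  qed (use Suc in simp)
qed simp

lemma dipath_closed_from_start:
  assumes "dipath A P x y" "x \<in> S" "\<And>u v. u \<in> S \<Longrightarrow> (u, v) \<in> A \<Longrightarrow> v \<in> set P \<Longrightarrow> v \<in> S"
  shows "set P \<subseteq> S"
  using dipath_closed_suffix[OF assms(1,3), where i=0] dipath_nth_0[OF assms(1)] assms(2)
  by (auto simp: in_set_conv_nth)

lemma dipath_closed_to_end:
  assumes "dipath A P x y" "\<And>u v. u \<in> S \<Longrightarrow> (u, v) \<in> A \<Longrightarrow> v \<in> set P \<Longrightarrow> v \<in> S"
    and "z \<in> set P" "z \<in> S"
  shows "y \<in> S"
proof -
  obtain i where "i < length P" "P ! i = z" using assms(3) by (auto simp: in_set_conv_nth)
  then show ?thesis using dipath_closed_suffix[of A P x y S i "length P - 1"] assms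
    dipath_nth_last[OF assms(1)] by simp
qed

lemma dipath_set: "dipath B P x y \<Longrightarrow> B \<subseteq> W \<times> W \<Longrightarrow> set P \<subseteq> W"
  using dipath_closed_from_start[of B P x y W] dipath_first_arc[of B P x y] by blast

section \<open>Spindles, colourings and relabelling\<close>

definition two_spindle_free :: "('a \<times> 'a) set \<Rightarrow> bool" where
  "two_spindle_free A \<longleftrightarrow>
     (\<forall>P Q x y. dipath A P x y \<longrightarrow> dipath A Q x y \<longrightarrow> \<not> internally_disjoint P Q)"

lemma has_spindle_eq_has_bispindle: "has_spindle V A p = has_bispindle V A p 0"
  unfolding has_spindle_def has_bispindle_def by (auto dest: leD)

lemma colourable_mono: "colourable V A j \<Longrightarrow> j \<le> k \<Longrightarrow> colourable V A k"
  unfolding colourable_def by (meson lessThan_subset_iff order_trans)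

lemma colourable_hom:
  assumes "colourable V A k" "f ` W \<subseteq> V" "\<And>u v. (u, v) \<in> B \<Longrightarrow> (f u, f v) \<in> A"
  shows "colourable W B k"
proof -
  obtain c :: "'a \<Rightarrow> nat" where c: "c ` V \<subseteq> {..<k}" "\<forall>(u, v) \<in> A. c u \<noteq> c v"
    using assms(1) unfolding colourable_def by blast
  have "(c \<circ> f) ` W \<subseteq> {..<k}" using c(1) assms(2) by (force simp: image_subset_iff)
  moreover have "\<forall>(u, v) \<in> B. (c \<circ> f) u \<noteq> (c \<circ> f) v" using c(2) assms(3) by fastforce
  ultimately show ?thesis unfolding colourable_def by blast
qed

lemma colourable_avoiding_colour:
  assumes "A \<subseteq> V \<times> V" "i \<le> k" "c ` V \<subseteq> {..<Suc k} - {i}" "\<forall>(u, v) \<in> A. c u \<noteq> c v"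
  shows "colourable V A k"
proof -
  define c' where "c' v = (if c v < i then c v else c v - 1)" for v
  have "c' v < k" if "v \<in> V" for v
    using assms(2,3) that unfolding c'_def by (force simp: image_subset_iff)
  moreover have "c' u \<noteq> c' v" if "(u, v) \<in> A" for u v
  proof -
    have "c u \<noteq> c v" "c u \<noteq> i" "c v \<noteq> i" using assms(1,3,4) that by (auto simp: image_subset_iff)
    then show ?thesis unfolding c'_def by auto
  qed
  ultimately show ?thesis unfolding colourable_def by blast
qed

lemma colourable_card:
  assumes "digraph V A" shows "colourable V A (card V)"
proof -
  have "finite V" and AV: "A \<subseteq> V \<times> V" and loopless: "\<forall>v. (v, v) \<notin> A"
    using assms unfolding digraph_def by auto
  then obtain f :: "'a \<Rightarrow> nat" where f: "bij_betw f V {..<card V}"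
    using ex_bij_betw_finite_nat[OF \<open>finite V\<close>] by (metis atLeast0LessThan)
  have "f u \<noteq> f v" if "(u, v) \<in> A" for u v
    using that AV loopless bij_betw_imp_inj_on[OF f] by (metis inj_onD mem_Sigma_iff subsetD)
  then show ?thesis using bij_betw_imp_surj_on[OF f] unfolding colourable_def by blast
qed

lemma chromatic_number_gt:
  assumes "digraph V A" "\<not> colourable V A k"
  shows "k < chromatic_number V A"
proof -
  have "colourable V A (chromatic_number V A)"
    unfolding chromatic_number_def using colourable_card[OF assms(1)] by (rule LeastI)
  then show ?thesis using assms(2) colourable_mono by (meson not_less)
qed

lemma digraph_finite_arcs: "digraph V A \<Longrightarrow> finite A"
  unfolding digraph_def by (meson finite_SigmaI finite_subset)

lemma has_bispindle_inj_hom: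
  assumes "has_bispindle W B p q" "B \<subseteq> W \<times> W" "inj_on f W" "f ` W \<subseteq> V"
    and arcs: "\<And>u v. (u, v) \<in> B \<Longrightarrow> (f u, f v) \<in> A"
  shows "has_bispindle V A p q"
proof -
  obtain x y P where xy: "x \<in> W" "y \<in> W" "x \<noteq> y"
    and forward: "\<forall>i<p. dipath B (P i) x y"
    and backward: "\<forall>i. p \<le> i \<and> i < p + q \<longrightarrow> dipath B (P i) y x"
    and disjoint: "\<forall>i<p+q. \<forall>j<p+q. i \<noteq> j \<longrightarrow> internally_disjoint (P i) (P j)"
    using assms(1) unfolding has_bispindle_def internally_disjoint_def by blast
  have map_path: "dipath A (map f R) (f u) (f v)" if "dipath B R u v" for R u v
    by (rule dipath_map[OF that dipath_set[OF that assms(2)] assms(3)]) (rule arcs)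
  have in_W: "set (P i) \<subseteq> W" if "i < p + q" for i
  proof (rule dipath_set[OF _ assms(2)])
    show "dipath B (P i) (if i < p then x else y) (if i < p then y else x)"
      using forward backward that by simp
  qed
  have "internally_disjoint (map f (P i)) (map f (P j))" if "i < p + q" "j < p + q" "i \<noteq> j" for i j
    by (rule internally_disjoint_map[OF in_W[OF that(1)] in_W[OF that(2)] assms(3)])
      (use disjoint that in blast)
  moreover have "f x \<in> V" "f y \<in> V" "f x \<noteq> f y"
    using xy assms(3,4) by (auto dest: inj_on_contraD)
  moreover have "\<forall>i<p. dipath A (map f (P i)) (f x) (f y)" using forward map_path by simp
  moreover have "\<forall>i. p \<le> i \<and> i < p + q \<longrightarrow> dipath A (map f (P i)) (f y) (f x)"
    using backward map_path by simp
  ultimately show ?thesis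
    unfolding has_bispindle_def internally_disjoint_def
    by (intro bexI[of _ "f x"] bexI[of _ "f y"] exI[of _ "\<lambda>i. map f (P i)"] conjI) auto
qed

lemma two_spindle_free_inj_hom:
  assumes "two_spindle_free A" "B \<subseteq> W \<times> W" "inj_on f W"
    and arcs: "\<And>u v. (u, v) \<in> B \<Longrightarrow> (f u, f v) \<in> A"
  shows "two_spindle_free B"
  unfolding two_spindle_free_def
proof (intro allI impI notI)
  fix P Q x y
  assume P: "dipath B P x y" and Q: "dipath B Q x y" and "internally_disjoint P Q"
  have PW: "set P \<subseteq> W" and QW: "set Q \<subseteq> W"
    using dipath_set[OF P assms(2)] dipath_set[OF Q assms(2)] .
  have "dipath A (map f P) (f x) (f y)" "dipath A (map f Q) (f x) (f y)"
    using dipath_map[OF P PW assms(3)] dipath_map[OF Q QW assms(3)] arcs by blast+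
  moreover have "internally_disjoint (map f P) (map f Q)"
    using internally_disjoint_map[OF PW QW assms(3) \<open>internally_disjoint P Q\<close>] .
  ultimately show False using assms(1) unfolding two_spindle_free_def by blast
qed

lemma strongly_connected_image:
  assumes "strongly_connected V A"
  shows "strongly_connected (f ` V) (map_prod f f ` A)"
proof -
  have "(f u, f v) \<in> (map_prod f f ` A)\<^sup>*" if "(u, v) \<in> A\<^sup>*" for u v
    using that by (induction rule: rtrancl_induct) (auto intro: rtrancl_into_rtrancl)
  then show ?thesis using assms unfolding strongly_connected_def by blast
qed

lemma digraph_nat_copy:
  fixes V :: "'a set"
  assumes "digraph V A"
  obtains V' :: "nat set" and A' where "digraph V' A'"
    "strongly_connected V A \<Longrightarrow> strongly_connected V' A'"
    "\<And>k. colourable V' A' k \<Longrightarrow> colourable V A k"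
    "\<And>p q. has_bispindle V' A' p q \<Longrightarrow> has_bispindle V A p q"
    "two_spindle_free A \<Longrightarrow> two_spindle_free A'"
proof -
  have "finite V" and AV: "A \<subseteq> V \<times> V" and loopless: "\<forall>v. (v, v) \<notin> A"
    using assms unfolding digraph_def by auto
  obtain h :: "'a \<Rightarrow> nat" where h: "inj_on h V"
    using finite_imp_inj_to_nat_seg[OF \<open>finite V\<close>] by metis
  let ?A' = "map_prod h h ` A"
  have A'V: "?A' \<subseteq> h ` V \<times> h ` V" using AV by auto
  have pull_arc: "(inv_into V h u, inv_into V h v) \<in> A" if uv: "(u, v) \<in> ?A'" for u v
  proof -
    obtain a b where ab: "(a, b) \<in> A" "u = h a" "v = h b" using uv by auto
    then have "a \<in> V" "b \<in> V" using AV by auto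
    then show ?thesis using ab inv_into_f_f[OF h] by simp
  qed
  have inj_back: "inj_on (inv_into V h) (h ` V)" by (rule inj_on_inv_into) (rule subset_refl)
  have back_into: "inv_into V h ` h ` V \<subseteq> V" by (intro image_subsetI inv_into_into)
  show thesis
  proof (rule that[of "h ` V" ?A'])
    have "(u, u) \<notin> ?A'" for u using pull_arc[of u u] loopless by fast
    then show "digraph (h ` V) ?A'" using \<open>finite V\<close> A'V unfolding digraph_def by simp
    show "strongly_connected (h ` V) ?A'" if "strongly_connected V A"
      using strongly_connected_image[OF that] .
    show "colourable V A k" if "colourable (h ` V) ?A' k" for k
      by (rule colourable_hom[OF that, of h]) (simp, force)
    show "has_bispindle V A p q" if "has_bispindle (h ` V) ?A' p q" for p q
      by (rule has_bispindle_inj_hom[OF that A'V inj_back back_into pull_arc])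
    show "two_spindle_free ?A'" if "two_spindle_free A"
      by (rule two_spindle_free_inj_hom[OF that A'V inj_back pull_arc])
  qed
qed

section \<open>Blanche Descartes' construction\<close>

datatype 'a descartes_vertex = Sink nat | Copy (copy_map: "'a \<Rightarrow> nat") (copy_vertex: 'a)

definition descartes_maps :: "'a set \<Rightarrow> nat \<Rightarrow> ('a \<Rightarrow> nat) set" where
  "descartes_maps V N = {g \<in> V \<rightarrow>\<^sub>E {..<N}. inj_on g V}"

definition descartes_vertices :: "'a set \<Rightarrow> nat \<Rightarrow> 'a descartes_vertex set" where
  "descartes_vertices V N = Sink ` {..<N} \<union> (\<lambda>(g, v). Copy g v) ` (descartes_maps V N \<times> V)"

definition descartes_arcs ::
    "'a set \<Rightarrow> ('a \<times> 'a) set \<Rightarrow> nat \<Rightarrow> ('a descartes_vertex \<times> 'a descartes_vertex) set" where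
  "descartes_arcs V A N =
     {(Copy g u, Copy g v) | g u v. g \<in> descartes_maps V N \<and> (u, v) \<in> A} \<union>
     {(Copy g v, Sink (g v)) | g v. g \<in> descartes_maps V N \<and> v \<in> V}"

lemma descartes_arcs_cases:
  assumes "(a, b) \<in> descartes_arcs V A N"
  obtains (copy) g u v where "a = Copy g u" "b = Copy g v" "g \<in> descartes_maps V N" "(u, v) \<in> A"
    | (sink) g v where "a = Copy g v" "b = Sink (g v)" "g \<in> descartes_maps V N" "v \<in> V"
  using assms unfolding descartes_arcs_def by blast

lemma descartes_digraph:
  assumes "digraph V A" shows "digraph (descartes_vertices V N) (descartes_arcs V A N)"
proof -
  have "finite V" and AV: "A \<subseteq> V \<times> V" and loopless: "\<forall>v. (v, v) \<notin> A"
    using assms unfolding digraph_def by auto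
  have "descartes_maps V N \<subseteq> V \<rightarrow>\<^sub>E {..<N}" unfolding descartes_maps_def by auto
  then have "finite (descartes_maps V N)"
    by (rule finite_subset[OF _ finite_PiE[OF \<open>finite V\<close>]]) simp_all
  then have fin: "finite (descartes_vertices V N)"
    using \<open>finite V\<close> unfolding descartes_vertices_def by simp
  have arc_ends: "(a, b) \<in> descartes_vertices V N \<times> descartes_vertices V N"
    if "(a, b) \<in> descartes_arcs V A N" for a b
    using that
  proof (cases rule: descartes_arcs_cases)
    case (copy g u v)
    then show ?thesis using AV unfolding descartes_vertices_def by force
  next
    case (sink g v)
    then have "g v < N" unfolding descartes_maps_def by auto
    then show ?thesis using sink unfolding descartes_vertices_def by force
  qed
  have "descartes_arcs V A N \<subseteq> descartes_vertices V N \<times> descartes_vertices V N"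
    using arc_ends by fast
  moreover have "(v, v) \<notin> descartes_arcs V A N" for v
    using loopless by (auto elim: descartes_arcs_cases)
  ultimately show ?thesis using fin unfolding digraph_def by blast
qed

lemma large_colour_class:
  assumes "c \<in> {..<Suc k * n} \<rightarrow> {..<Suc k}"
  obtains i where "i < Suc k" "n \<le> card {s \<in> {..<Suc k * n}. c s = i}"
proof -
  obtain i where "i < Suc k" and "Suc k * n \<le> card (c -` {i} \<inter> {..<Suc k * n}) * Suc k"
    using pigeonhole_card[OF assms] by auto
  moreover have "c -` {i} \<inter> {..<Suc k * n} = {s \<in> {..<Suc k * n}. c s = i}" by auto
  ultimately show ?thesis using that by (simp only: mult.commute[of _ "Suc k"] Suc_mult_le_cancel1)
qed

lemma descartes_not_colourable:
  assumes "digraph V A" "\<not> colourable V A k" "N = Suc k * card V"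
  shows "\<not> colourable (descartes_vertices V N) (descartes_arcs V A N) (Suc k)"
proof
  assume "colourable (descartes_vertices V N) (descartes_arcs V A N) (Suc k)"
  then obtain c where c: "c ` descartes_vertices V N \<subseteq> {..<Suc k}"
    and proper: "\<forall>(a, b) \<in> descartes_arcs V A N. c a \<noteq> c b"
    unfolding colourable_def by blast
  have "finite V" and AV: "A \<subseteq> V \<times> V" using assms(1) unfolding digraph_def by auto
  define C where "C i = {s \<in> {..<N}. c (Sink s) = i}" for i
  have "(\<lambda>s. c (Sink s)) \<in> {..<Suc k * card V} \<rightarrow> {..<Suc k}"
    using c assms(3) unfolding descartes_vertices_def by auto
  then obtain i where i: "i < Suc k" and "card V \<le> card (C i)"
    using large_colour_class unfolding C_def assms(3) by blast
  moreover have "finite (C i)" unfolding C_def by simp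
  ultimately obtain f where f: "f ` V \<subseteq> C i" "inj_on f V"
    using card_le_inj[OF \<open>finite V\<close>] by blast
  define g where "g = restrict f V"
  have g: "g \<in> descartes_maps V N" "\<And>v. v \<in> V \<Longrightarrow> g v = f v"
    using f unfolding descartes_maps_def g_def inj_on_def C_def by auto
  have "c (Copy g v) \<noteq> i" if "v \<in> V" for v
  proof -
    have "(Copy g v, Sink (g v)) \<in> descartes_arcs V A N"
      using g(1) that unfolding descartes_arcs_def by blast
    moreover have "c (Sink (g v)) = i" using f(1) g(2) that unfolding C_def by auto
    ultimately show ?thesis using proper by fastforce
  qed
  moreover have "c (Copy g v) < Suc k" if "v \<in> V" for v
    using c g(1) that unfolding descartes_vertices_def by blast
  ultimately have "(\<lambda>v. c (Copy g v)) ` V \<subseteq> {..<Suc k} - {i}" by auto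
  moreover have "\<forall>(u, v) \<in> A. c (Copy g u) \<noteq> c (Copy g v)"
    using proper g(1) unfolding descartes_arcs_def by blast
  ultimately have "colourable V A k"
    using colourable_avoiding_colour[OF AV, of i k "\<lambda>v. c (Copy g v)"] i by simp
  then show False using assms(2) by simp
qed

lemma descartes_arcs_Copy_Copy: "(Copy g u, Copy g' v) \<in> descartes_arcs V A N \<Longrightarrow> (u, v) \<in> A"
  by (auto elim: descartes_arcs_cases)

lemma descartes_arcs_to_Sink:
  "(a, Sink s) \<in> descartes_arcs V A N \<Longrightarrow>
     \<exists>v. a = Copy (copy_map a) v \<and> copy_map a \<in> descartes_maps V N \<and> v \<in> V \<and> copy_map a v = s"
  by (auto elim: descartes_arcs_cases)

lemma descartes_dipath_copy:
  assumes P: "dipath (descartes_arcs V A N) P x y"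
  shows "x = Copy (copy_map x) (copy_vertex x)" "set P \<subseteq> range (Copy (copy_map x)) \<union> range Sink"
proof -
  have "(x, P ! 1) \<in> descartes_arcs V A N" by (rule dipath_first_arc[OF P])
  then show x: "x = Copy (copy_map x) (copy_vertex x)" by (auto elim: descartes_arcs_cases)
  show "set P \<subseteq> range (Copy (copy_map x)) \<union> range Sink"
  proof (rule dipath_closed_from_start[OF P])
    show "x \<in> range (Copy (copy_map x)) \<union> range Sink" using x by (metis UnI1 rangeI)
    fix u v assume "u \<in> range (Copy (copy_map x)) \<union> range Sink" "(u, v) \<in> descartes_arcs V A N"
    then show "v \<in> range (Copy (copy_map x)) \<union> range Sink"
      by (auto elim: descartes_arcs_cases)
  qed
qed

lemma descartes_dipath_avoiding_sinks:
  assumes P: "dipath (descartes_arcs V A N) P x y" and "y \<notin> range Sink"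
  shows "set P \<subseteq> range (Copy (copy_map x))"
proof -
  have "z \<notin> range Sink" if "z \<in> set P" for z
  proof
    assume z: "z \<in> range Sink"
    have "y \<in> range Sink"
      by (rule dipath_closed_to_end[OF P _ that z]) (auto elim: descartes_arcs_cases)
    then show False using assms(2) by simp
  qed
  then show ?thesis using descartes_dipath_copy(2)[OF P] by blast
qed

lemma descartes_two_spindle_free:
  assumes "two_spindle_free A" shows "two_spindle_free (descartes_arcs V A N)"
  unfolding two_spindle_free_def
proof (intro allI impI notI)
  fix P Q x y
  assume P: "dipath (descartes_arcs V A N) P x y" and Q: "dipath (descartes_arcs V A N) Q x y"
    and PQ: "internally_disjoint P Q"
  let ?g = "copy_map x"
  show False
  proof (cases "y \<in> range Sink")
    case True
    then obtain s where y: "y = Sink s" by blast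
    define p where "p = P ! (length P - 2)"
    define q where "q = Q ! (length Q - 2)"
    obtain u w
      where "p = Copy (copy_map p) u" "copy_map p \<in> descartes_maps V N" "u \<in> V" "copy_map p u = s"
        and "q = Copy (copy_map q) w" "copy_map q \<in> descartes_maps V N" "w \<in> V" "copy_map q w = s"
      using descartes_arcs_to_Sink dipath_last_arc[OF P] dipath_last_arc[OF Q] y
      unfolding p_def q_def by metis
    moreover have "p \<in> set P" "q \<in> set Q"
      using dipath_length[OF P] dipath_length[OF Q] unfolding p_def q_def by simp_all
    then have "p \<in> range (Copy ?g) \<union> range Sink" "q \<in> range (Copy ?g) \<union> range Sink"
      using descartes_dipath_copy(2)[OF P] descartes_dipath_copy(2)[OF Q] by blast+
    ultimately have "p = q" unfolding descartes_maps_def by (auto dest: inj_onD)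
    then show False
      using internally_disjoint_penultimate_vertex[OF P Q PQ] unfolding p_def q_def by simp
  next
    case False
    have PW: "set P \<subseteq> range (Copy ?g)" and QW: "set Q \<subseteq> range (Copy ?g)"
      using descartes_dipath_avoiding_sinks[OF _ False] P Q by blast+
    have inj: "inj_on copy_vertex (range (Copy ?g))" by (auto intro: inj_onI)
    have arcs: "(copy_vertex a, copy_vertex b) \<in> A"
      if "a \<in> range (Copy ?g)" "b \<in> range (Copy ?g)" "(a, b) \<in> descartes_arcs V A N" for a b
      using that descartes_arcs_Copy_Copy by auto
    have "dipath A (map copy_vertex P) (copy_vertex x) (copy_vertex y)"
      and "dipath A (map copy_vertex Q) (copy_vertex x) (copy_vertex y)"
      using dipath_map[OF P PW inj arcs] dipath_map[OF Q QW inj arcs] by blast+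
    moreover have "internally_disjoint (map copy_vertex P) (map copy_vertex Q)"
      by (rule internally_disjoint_map[OF PW QW inj PQ])
    ultimately show False using assms unfolding two_spindle_free_def by blast
  qed
qed

lemma two_spindle_free_empty: "two_spindle_free {}"
  unfolding two_spindle_free_def by (auto dest: dipath_first_arc)

lemma exists_two_spindle_free_not_colourable:
  "\<exists>(V :: nat set) A. digraph V A \<and> \<not> colourable V A k \<and> two_spindle_free A"
proof (induction k)
  case 0
  have "digraph {0 :: nat} {}" "\<not> colourable {0 :: nat} {} 0"
    unfolding digraph_def colourable_def by simp_all
  then show ?case using two_spindle_free_empty by blast
next
  case (Suc k)
  then obtain V :: "nat set" and A where "digraph V A" "\<not> colourable V A k" "two_spindle_free A"
    by blast
  define N where "N = Suc k * card V"
  obtain V' :: "nat set" and A' where "digraph V' A'"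
    and "\<And>j. colourable V' A' j \<Longrightarrow> colourable (descartes_vertices V N) (descartes_arcs V A N) j"
    and "two_spindle_free (descartes_arcs V A N) \<Longrightarrow> two_spindle_free A'"
    using digraph_nat_copy[OF descartes_digraph[OF \<open>digraph V A\<close>]] by metis
  then show ?case
    using descartes_not_colourable[OF \<open>digraph V A\<close> \<open>\<not> colourable V A k\<close> N_def]
      descartes_two_spindle_free[OF \<open>two_spindle_free A\<close>] by blast
qed

section \<open>Adding a hub\<close>

datatype hub_vertex = Orig (orig_index: nat) | Down nat | Up nat | Hub

definition hub_vertices :: "nat set \<Rightarrow> nat \<Rightarrow> hub_vertex set" where
  "hub_vertices V m = Orig ` V \<union> Down ` {..m} \<union> Up ` {..m} \<union> {Hub}"

definition hub_arcs :: "(nat \<times> nat) set \<Rightarrow> nat set \<Rightarrow> nat \<Rightarrow> (hub_vertex \<times> hub_vertex) set" where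
  "hub_arcs A V m = map_prod Orig Orig ` A \<union> (\<lambda>v. (Orig v, Down v)) ` V \<union> (\<lambda>v. (Up v, Orig v)) ` V
     \<union> (\<lambda>i. (Down (Suc i), Down i)) ` {..<m} \<union> (\<lambda>i. (Up i, Up (Suc i))) ` {..<m}
     \<union> {(Down 0, Hub), (Hub, Up 0)}"

lemma hub_digraph:
  assumes "digraph V A" "V \<subseteq> {..m}"
  shows "digraph (hub_vertices V m) (hub_arcs A V m)"
  using assms unfolding digraph_def hub_vertices_def hub_arcs_def by auto

lemma hub_colourable: "colourable (hub_vertices V m) (hub_arcs A V m) k \<Longrightarrow> colourable V A k"
  by (rule colourable_hom[of _ _ _ Orig]) (auto simp: hub_vertices_def hub_arcs_def)

lemma card_le_2_if_subset_pair: "X \<subseteq> {a, b} \<Longrightarrow> card X \<le> 2"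
  using card_mono[of "{a, b}" X] by (auto simp: card_insert_if split: if_splits)

lemma card_le_1_if_subset_singleton: "X \<subseteq> {a} \<Longrightarrow> card X \<le> 1"
  using card_mono[of "{a}" X] by simp

lemma hub_high_degree_imp_Orig:
  assumes "3 \<le> card (hub_arcs A V m `` {z}) \<or> 3 \<le> card ((hub_arcs A V m)\<inverse> `` {z}) \<or>
    2 \<le> card (hub_arcs A V m `` {z}) \<and> 2 \<le> card ((hub_arcs A V m)\<inverse> `` {z})"
  shows "z \<in> range Orig"
proof (cases z)
  case (Down i)
  have "card (hub_arcs A V m `` {z}) \<le> 1"
    by (rule card_le_1_if_subset_singleton[of _ "if i = 0 then Hub else Down (i - 1)"])
      (auto simp: Down hub_arcs_def)
  moreover have "card ((hub_arcs A V m)\<inverse> `` {z}) \<le> 2"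
    by (rule card_le_2_if_subset_pair[of _ "Down (Suc i)" "Orig i"]) (auto simp: Down hub_arcs_def)
  ultimately show ?thesis using assms by linarith
next
  case (Up i)
  have "card (hub_arcs A V m `` {z}) \<le> 2"
    by (rule card_le_2_if_subset_pair[of _ "Up (Suc i)" "Orig i"]) (auto simp: Up hub_arcs_def)
  moreover have "card ((hub_arcs A V m)\<inverse> `` {z}) \<le> 1"
    by (rule card_le_1_if_subset_singleton[of _ "if i = 0 then Hub else Up (i - 1)"])
      (auto simp: Up hub_arcs_def)
  ultimately show ?thesis using assms by linarith
next
  case Hub
  have "card (hub_arcs A V m `` {z}) \<le> 1"
    by (rule card_le_1_if_subset_singleton[of _ "Up 0"]) (auto simp: Hub hub_arcs_def)
  moreover have "card ((hub_arcs A V m)\<inverse> `` {z}) \<le> 1"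
    by (rule card_le_1_if_subset_singleton[of _ "Down 0"]) (auto simp: Hub hub_arcs_def)
  ultimately show ?thesis using assms by linarith
qed simp

lemma hub_arcs_Up_path: "i \<le> j \<Longrightarrow> j \<le> m \<Longrightarrow> (Up i, Up j) \<in> (hub_arcs A V m)\<^sup>*"
proof (induction j)
  case (Suc j)
  then show ?case
  proof (cases "i = Suc j")
    case False
    then have "(Up i, Up j) \<in> (hub_arcs A V m)\<^sup>*" using Suc by simp
    moreover have "(Up j, Up (Suc j)) \<in> hub_arcs A V m"
      using Suc.prems unfolding hub_arcs_def by auto
    ultimately show ?thesis by (rule rtrancl_into_rtrancl)
  qed simp
qed simp

lemma hub_arcs_Down_path: "i \<le> j \<Longrightarrow> j \<le> m \<Longrightarrow> (Down j, Down i) \<in> (hub_arcs A V m)\<^sup>*"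
proof (induction j)
  case (Suc j)
  then show ?case
  proof (cases "i = Suc j")
    case False
    then have "(Down j, Down i) \<in> (hub_arcs A V m)\<^sup>*" using Suc by simp
    moreover have "(Down (Suc j), Down j) \<in> hub_arcs A V m"
      using Suc.prems unfolding hub_arcs_def by auto
    ultimately show ?thesis by (meson converse_rtrancl_into_rtrancl)
  qed simp
qed simp

lemma hub_strongly_connected:
  assumes "V \<subseteq> {..m}" "m \<in> V"
  shows "strongly_connected (hub_vertices V m) (hub_arcs A V m)"
proof -
  let ?R = "hub_arcs A V m"
  have arcs: "(Orig v, Down v) \<in> ?R" "(Up v, Orig v) \<in> ?R" if "v \<in> V" for v
    using that unfolding hub_arcs_def by auto
  have hub_arcs: "(Down 0, Hub) \<in> ?R" "(Hub, Up 0) \<in> ?R" unfolding hub_arcs_def by auto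
  have Down_Hub: "(Down i, Hub) \<in> ?R\<^sup>*" and Hub_Up: "(Hub, Up i) \<in> ?R\<^sup>*" if "i \<le> m" for i
    using hub_arcs_Down_path[of 0 i] hub_arcs_Up_path[of 0 i] hub_arcs that
    by (meson le0 rtrancl_into_rtrancl converse_rtrancl_into_rtrancl)+
  have Orig_Hub: "(Orig v, Hub) \<in> ?R\<^sup>*" and Hub_Orig: "(Hub, Orig v) \<in> ?R\<^sup>*" if "v \<in> V" for v
    using arcs[OF that] Down_Hub Hub_Up assms(1) that
    by (meson atMost_iff converse_rtrancl_into_rtrancl rtrancl_into_rtrancl subsetD)+
  have Up_Hub: "(Up i, Hub) \<in> ?R\<^sup>*" and Hub_Down: "(Hub, Down i) \<in> ?R\<^sup>*" if "i \<le> m" for i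
    using hub_arcs_Up_path[OF that order_refl] hub_arcs_Down_path[OF that order_refl]
      arcs[OF assms(2)] Orig_Hub[OF assms(2)] Hub_Orig[OF assms(2)]
    by (meson converse_rtrancl_into_rtrancl rtrancl_into_rtrancl rtrancl_trans)+
  have "(u, Hub) \<in> ?R\<^sup>* \<and> (Hub, u) \<in> ?R\<^sup>*" if "u \<in> hub_vertices V m" for u
    using that Orig_Hub Hub_Orig Down_Hub Hub_Down Up_Hub Hub_Up unfolding hub_vertices_def by auto
  then show ?thesis unfolding strongly_connected_def by (meson rtrancl_trans)
qed

text \<open>A path can leave the Down vertices only through Hub and enter the Up vertices only
  through Hub.\<close>

lemma hub_dipath_avoiding_Hub:
  assumes P: "dipath (hub_arcs A V m) P (Orig a) (Orig b)" and "Hub \<notin> set P"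
  shows "set P \<subseteq> range Orig"
proof
  fix z assume z: "z \<in> set P"
  have "z \<notin> range Down"
  proof
    assume "z \<in> range Down"
    have "Orig b \<in> range Down"
      by (rule dipath_closed_to_end[OF P _ z \<open>z \<in> range Down\<close>])
        (use assms(2) in \<open>auto simp: hub_arcs_def\<close>)
    then show False by auto
  qed
  moreover have "z \<notin> range Up"
  proof
    assume "z \<in> range Up"
    have "Orig a \<in> range Up"
      by (rule dipath_closed_to_end[OF dipath_rev[OF P] _ _ \<open>z \<in> range Up\<close>])
        (use assms(2) z in \<open>auto simp: hub_arcs_def\<close>)
    then show False by auto
  qed
  ultimately show "z \<in> range Orig" using assms(2) z by (cases z) auto
qed

lemma hub_disjoint_dipaths_through_Hub:
  assumes "two_spindle_free A"
    and P: "dipath (hub_arcs A V m) P (Orig a) (Orig b)"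
    and Q: "dipath (hub_arcs A V m) Q (Orig a) (Orig b)"
    and PQ: "internally_disjoint P Q"
  shows "Hub \<in> interior P \<union> interior Q"
proof (rule ccontr)
  assume "Hub \<notin> interior P \<union> interior Q"
  then have PW: "set P \<subseteq> range Orig" and QW: "set Q \<subseteq> range Orig"
    using hub_dipath_avoiding_Hub[OF P] hub_dipath_avoiding_Hub[OF Q]
      set_dipath[OF P] set_dipath[OF Q] by auto
  have inj: "inj_on orig_index (range Orig)" by (auto intro: inj_onI)
  have arcs: "(orig_index u, orig_index v) \<in> A"
    if "u \<in> range Orig" "v \<in> range Orig" "(u, v) \<in> hub_arcs A V m" for u v
    using that unfolding hub_arcs_def by auto
  have "dipath A (map orig_index P) a b" "dipath A (map orig_index Q) a b"
    using dipath_map[OF P PW inj arcs] dipath_map[OF Q QW inj arcs] by simp_all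
  moreover have "internally_disjoint (map orig_index P) (map orig_index Q)"
    by (rule internally_disjoint_map[OF PW QW inj PQ])
  ultimately show False using assms(1) unfolding two_spindle_free_def by blast
qed

lemma hub_no_3_spindle:
  assumes "digraph V A" "V \<subseteq> {..m}" "two_spindle_free A"
  shows "\<not> has_spindle (hub_vertices V m) (hub_arcs A V m) 3"
proof
  let ?R = "hub_arcs A V m"
  assume "has_spindle (hub_vertices V m) ?R 3"
  then obtain x y and P :: "nat \<Rightarrow> hub_vertex list"
    where "\<forall>i<3. dipath ?R (P i) x y"
      and "\<forall>i<3. \<forall>j<3. i \<noteq> j \<longrightarrow> internally_disjoint (P i) (P j)"
    unfolding has_spindle_def internally_disjoint_def by blast
  then have paths: "\<And>i. i \<in> {..<3} \<Longrightarrow> dipath ?R (P i) x y"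
    and disjoint: "pairwise (\<lambda>i j. internally_disjoint (P i) (P j)) {..<3}"
    unfolding pairwise_def by simp_all
  have "finite ?R" using digraph_finite_arcs[OF hub_digraph[OF assms(1,2)]] .
  then have "3 \<le> card (?R `` {x})" "3 \<le> card (?R\<inverse> `` {y})"
    using pairwise_internally_disjoint_out_degree[OF _ _ paths disjoint]
      pairwise_internally_disjoint_in_degree[OF _ _ paths disjoint] by simp_all
  then obtain a b where "x = Orig a" "y = Orig b" using hub_high_degree_imp_Orig by (metis rangeE)
  then have through: "Hub \<in> interior (P i) \<union> interior (P j)" if "i < 3" "j < 3" "i \<noteq> j" for i j
    using hub_disjoint_dipaths_through_Hub[OF assms(3), of V m "P i" a b "P j"]
      paths[of i] paths[of j] pairwiseD[OF disjoint, of i j] that by simp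
  have apart: "interior (P i) \<inter> interior (P j) = {}" if "i < 3" "j < 3" "i \<noteq> j" for i j
    using pairwiseD[OF disjoint] that unfolding internally_disjoint_def by simp
  show False
    using through[of 0 1] through[of 0 2] through[of 1 2] apart[of 0 1] apart[of 0 2] apart[of 1 2]
    by auto
qed

lemma hub_no_2_2_bispindle:
  assumes "digraph V A" "V \<subseteq> {..m}" "two_spindle_free A"
  shows "\<not> has_bispindle (hub_vertices V m) (hub_arcs A V m) 2 2"
proof
  let ?R = "hub_arcs A V m"
  assume "has_bispindle (hub_vertices V m) ?R 2 2"
  then obtain x y and P :: "nat \<Rightarrow> hub_vertex list"
    where forward: "\<forall>i<2. dipath ?R (P i) x y"
      and backward: "\<forall>i. 2 \<le> i \<and> i < 2 + 2 \<longrightarrow> dipath ?R (P i) y x"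
      and disjoint: "\<forall>i<2+2. \<forall>j<2+2. i \<noteq> j \<longrightarrow> internally_disjoint (P i) (P j)"
    unfolding has_bispindle_def internally_disjoint_def by blast
  have xy: "\<And>i. i \<in> {0, 1} \<Longrightarrow> dipath ?R (P i) x y"
    and yx: "\<And>i. i \<in> {2, 3} \<Longrightarrow> dipath ?R (P i) y x" using forward backward by auto
  have apart: "internally_disjoint (P i) (P j)" if "i < 4" "j < 4" "i \<noteq> j" for i j
    using disjoint that by simp
  have fin: "finite ?R" using digraph_finite_arcs[OF hub_digraph[OF assms(1,2)]] .
  have "pairwise (\<lambda>i j. internally_disjoint (P i) (P j)) {0, 1}"
    and "pairwise (\<lambda>i j. internally_disjoint (P i) (P j)) {2, 3}"
    unfolding pairwise_def using apart by auto
  then have "card {0 :: nat, 1} \<le> card (?R `` {x})" "card {0 :: nat, 1} \<le> card (?R\<inverse> `` {y})"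
    "card {2 :: nat, 3} \<le> card (?R `` {y})" "card {2 :: nat, 3} \<le> card (?R\<inverse> `` {x})"
    using pairwise_internally_disjoint_out_degree[of ?R "{0, 1}" P x y, OF fin _ xy]
      pairwise_internally_disjoint_in_degree[of ?R "{0, 1}" P x y, OF fin _ xy]
      pairwise_internally_disjoint_out_degree[of ?R "{2, 3}" P y x, OF fin _ yx]
      pairwise_internally_disjoint_in_degree[of ?R "{2, 3}" P y x, OF fin _ yx]
    by simp_all
  then have "2 \<le> card (?R `` {x})" "2 \<le> card (?R\<inverse> `` {x})"
    and "2 \<le> card (?R `` {y})" "2 \<le> card (?R\<inverse> `` {y})" by simp_all
  then obtain a b where "x = Orig a" "y = Orig b" using hub_high_degree_imp_Orig by (metis rangeE)
  then have "Hub \<in> interior (P 0) \<union> interior (P 1)" "Hub \<in> interior (P 2) \<union> interior (P 3)"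
    using hub_disjoint_dipaths_through_Hub[OF assms(3), of V m "P 0" a b "P 1"]
      hub_disjoint_dipaths_through_Hub[OF assms(3), of V m "P 2" b a "P 3"]
      xy[of 0] xy[of 1] yx[of 2] yx[of 3] apart[of 0 1] apart[of 2 3] by simp_all
  then show False
    using apart[of 0 2] apart[of 0 3] apart[of 1 2] apart[of 1 3]
    unfolding internally_disjoint_def by auto
qed

theorem mainTheorem1:
  fixes k :: int
  shows "\<exists>(V :: nat set) (A :: (nat \<times> nat) set).
           digraph V A \<and> strongly_connected V A \<and> int (chromatic_number V A) > k \<and>
           \<not> has_spindle V A 3 \<and> \<not> has_bispindle V A 2 2"
proof -
  obtain V :: "nat set" and A where D: "digraph V A" "\<not> colourable V A (nat k)" "two_spindle_free A"
    using exists_two_spindle_free_not_colourable by blast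
  define m where "m = Max V"
  have "V \<noteq> {}" using D(1,2) unfolding colourable_def digraph_def by auto
  then have Vm: "V \<subseteq> {..m}" "m \<in> V" using D(1) unfolding m_def digraph_def by auto
  let ?W = "hub_vertices V m" and ?R = "hub_arcs A V m"
  have H: "digraph ?W ?R" "strongly_connected ?W ?R" "\<not> colourable ?W ?R (nat k)"
    "\<not> has_bispindle ?W ?R 3 0" "\<not> has_bispindle ?W ?R 2 2"
    using hub_digraph[OF D(1) Vm(1)] hub_strongly_connected[OF Vm] hub_colourable D(2)
      hub_no_3_spindle[OF D(1) Vm(1) D(3)] hub_no_2_2_bispindle[OF D(1) Vm(1) D(3)]
    by (auto simp: has_spindle_eq_has_bispindle)
  obtain V' :: "nat set" and A' where C: "digraph V' A'" "strongly_connected V' A'"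
    "\<not> colourable V' A' (nat k)" "\<not> has_bispindle V' A' 3 0" "\<not> has_bispindle V' A' 2 2"
    using digraph_nat_copy[OF H(1)] H(2-5) by metis
  moreover have "k < int (chromatic_number V' A')" using chromatic_number_gt[OF C(1,3)] by linarith
  ultimately show ?thesis
    by (intro exI[of _ V'] exI[of _ A']) (simp add: has_spindle_eq_has_bispindle)
qed

end
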